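(* Let $C$ be a real matrix and $h,\Delta$ real vectors of compatible dimensions with $\Delta_i\ge0$ for all $i$. Let $\Omega_1=\{x:Cx\le h\}$ and $\Omega_2=\{x:Cx\le h-\Delta\}$. Let $f$ be a convex function that is $L$-Lipschitz continuous on $\Omega_1$. Suppose $\Omega_1$ is bounded with $\sup_{x_1,x_1'\in\Omega_1}\|x_1-x_1'\|_2\le\delta_1$, and $\Omega_2$ is non-empty, containing some point $\mathring x$. Then $$\Big|\min_{x\in\Omega_1}f(x)-\min_{x\in\Omega_2}f(x)\Big|\le\frac{L\delta_1\|\Delta\|_\infty}{\min_{\{i:\Delta_i>0\}}(h-C\mathring x)_i}.$$
   Context: Inequalities between vectors are entrywise; $\|\Delta\|_\infty=\max_i|\Delta_i|$. *)

theory Defs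
  imports "HOL-Analysis.Analysis"
begin

end

theory Submission
  imports Defs
begin

text \<open>Since \<open>\<Omega>2 \<subseteq> \<Omega>1\<close>, the infimum over \<open>\<Omega>1\<close> is the smaller one. Conversely, let \<open>t\<close> be
  the ratio on the right-hand side divided by \<open>L \<delta>1\<close>. The slack of \<open>x0\<close> satisfies
  \<open>\<Delta> \<le> t (h - C x0)\<close>, so moving any \<open>x \<in> \<Omega>1\<close> the fraction \<open>min t 1\<close> of the way towards
  \<open>x0\<close> lands in \<open>\<Omega>2\<close>, at distance at most \<open>t \<delta>1\<close> from \<open>x\<close>; by the Lipschitz bound the
  two infima differ by at most \<open>L \<delta>1 t\<close>.\<close>

lemma abs_INF_diff_le_lipschitz_approx:
  fixes f :: "'a::heine_borel \<Rightarrow> real"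
  assumes lip: "L-lipschitz_on A f" and "bounded A" and "B \<subseteq> A" and "B \<noteq> {}"
    and approx: "\<And>x. x \<in> A \<Longrightarrow> \<exists>y\<in>B. dist y x \<le> \<epsilon>"
  shows "\<bar>(INF x\<in>A. f x) - (INF x\<in>B. f x)\<bar> \<le> L * \<epsilon>"
proof -
  have bdd_A: "bdd_below (f ` A)"
    using bounded_uniformly_continuous_image[OF lipschitz_on_uniformly_continuous[OF lip]]
      \<open>bounded A\<close> by (intro bounded_imp_bdd_below)
  then have bdd_B: "bdd_below (f ` B)"
    using \<open>B \<subseteq> A\<close> by (meson bdd_below_mono image_mono)
  have "(INF x\<in>A. f x) \<le> (INF x\<in>B. f x)"
    using \<open>B \<subseteq> A\<close> \<open>B \<noteq> {}\<close> bdd_A by (intro cINF_superset_mono) auto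
  moreover have "(INF x\<in>B. f x) - L * \<epsilon> \<le> (INF x\<in>A. f x)"
  proof (rule cINF_greatest)
    show "A \<noteq> {}" using \<open>B \<subseteq> A\<close> \<open>B \<noteq> {}\<close> by blast
  next
    fix x assume "x \<in> A"
    then obtain y where "y \<in> B" "dist y x \<le> \<epsilon>" using approx by blast
    have "(INF x\<in>B. f x) \<le> f y" using bdd_B \<open>y \<in> B\<close> by (rule cINF_lower)
    also have "\<dots> \<le> f x + L * dist y x"
      using lipschitz_onD[OF lip, of y x] \<open>y \<in> B\<close> \<open>x \<in> A\<close> \<open>B \<subseteq> A\<close>
      by (auto simp: dist_real_def)
    also have "L * dist y x \<le> L * \<epsilon>"
      using \<open>dist y x \<le> \<epsilon>\<close> lipschitz_on_nonneg[OF lip] by (rule mult_left_mono)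
    finally show "(INF x\<in>B. f x) - L * \<epsilon> \<le> f x" by simp
  qed
  ultimately show ?thesis by simp
qed

lemma matrix_vector_mult_convex_comb_le_tightened:
  fixes C :: "real ^ 'n ^ 'm"
  assumes "C *v x \<le> h" and "t \<le> 1" and "\<Delta> \<le> t *\<^sub>R (h - C *v x0)"
  shows "C *v ((1 - t) *\<^sub>R x + t *\<^sub>R x0) \<le> h - \<Delta>"
  unfolding less_eq_vec_def
proof
  fix i
  have "(1 - t) * (C *v x) $ i \<le> (1 - t) * h $ i"
    using assms(1,2) by (intro mult_left_mono) (auto simp: less_eq_vec_def)
  moreover have "\<Delta> $ i \<le> t * (h $ i - (C *v x0) $ i)"
    using assms(3) by (auto simp: less_eq_vec_def)
  ultimately show "(C *v ((1 - t) *\<^sub>R x + t *\<^sub>R x0)) $ i \<le> (h - \<Delta>) $ i"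
    by (simp add: matrix_vector_right_distrib matrix_vector_mult_scaleR algebra_simps)
qed

text \<open>The ratio is taken literally, including the case \<open>\<Delta> = 0\<close>, where the
  denominator is the junk value \<open>Min {}\<close> but the numerator is \<open>0\<close>.\<close>

lemma slack_ratio_nonneg:
  fixes \<Delta> a :: "real ^ 'm"
  assumes "0 \<le> \<Delta>" and "\<Delta> \<le> a"
  shows "0 \<le> (MAX i\<in>UNIV. \<bar>\<Delta> $ i\<bar>) / (MIN i\<in>{i. \<Delta> $ i > 0}. a $ i)"
proof (cases "\<exists>i. \<Delta> $ i > 0")
  case True
  then have "0 < (MIN i\<in>{i. \<Delta> $ i > 0}. a $ i)"
    using assms(2) by (subst Min_gr_iff) (auto simp: less_eq_vec_def intro: less_le_trans)
  moreover have "0 \<le> (MAX i\<in>UNIV. \<bar>\<Delta> $ i\<bar>)"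
    by (simp add: Max_ge_iff)
  ultimately show ?thesis by simp
next
  case False
  then have "\<Delta> = 0"
    using assms(1) by (simp add: vec_eq_iff less_eq_vec_def) (meson order.antisym not_less)
  then show ?thesis by simp
qed

lemma le_slack_ratio_scaleR:
  fixes \<Delta> a :: "real ^ 'm"
  assumes "0 \<le> \<Delta>" and "\<Delta> \<le> a"
  shows "\<Delta> \<le> ((MAX i\<in>UNIV. \<bar>\<Delta> $ i\<bar>) / (MIN i\<in>{i. \<Delta> $ i > 0}. a $ i)) *\<^sub>R a"
  unfolding less_eq_vec_def
proof
  fix i
  define M where "M = (MAX i\<in>UNIV. \<bar>\<Delta> $ i\<bar>)"
  define m where "m = (MIN i\<in>{i. \<Delta> $ i > 0}. a $ i)"
  have "0 \<le> M / m" and "0 \<le> a $ i"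
    using slack_ratio_nonneg[OF assms] assms unfolding M_def m_def less_eq_vec_def
    by (auto intro: order_trans)
  show "\<Delta> $ i \<le> ((M / m) *\<^sub>R a) $ i"
  proof (cases "\<Delta> $ i > 0")
    case True
    then have "0 < m"
      using assms(2) unfolding m_def
      by (subst Min_gr_iff) (auto simp: less_eq_vec_def intro: less_le_trans)
    have "m \<le> a $ i" unfolding m_def using True by (intro Min_le) auto
    have "\<Delta> $ i \<le> M" unfolding M_def by (rule order_trans[OF abs_ge_self]) simp
    also have "M = M / m * m" using \<open>0 < m\<close> by simp
    also have "\<dots> \<le> M / m * a $ i" using \<open>m \<le> a $ i\<close> \<open>0 \<le> M / m\<close> by (rule mult_left_mono)
    finally show ?thesis by simp
  next
    case False
    then have "\<Delta> $ i = 0"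
      using assms(1) by (simp add: less_eq_vec_def) (meson order.antisym not_less)
    then show ?thesis
      using mult_nonneg_nonneg[OF \<open>0 \<le> M / m\<close> \<open>0 \<le> a $ i\<close>] by simp
  qed
qed

theorem proposition2:
  fixes C :: "real ^ 'n ^ 'm" and h \<Delta> :: "real ^ 'm"
    and f :: "real ^ 'n \<Rightarrow> real" and L \<delta>1 :: real and x0 :: "real ^ 'n"
    and \<Omega>1 \<Omega>2 :: "(real ^ 'n) set"
  assumes \<Delta>_nonneg: "\<And>i. \<Delta> $ i \<ge> 0"
    and \<Omega>1_def: "\<Omega>1 = {x. C *v x \<le> h}"
    and \<Omega>2_def: "\<Omega>2 = {x. C *v x \<le> h - \<Delta>}"
    and f_convex: "convex_on UNIV f"
    and f_lip: "L-lipschitz_on \<Omega>1 f"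
    and \<Omega>1_bounded: "bounded \<Omega>1"
    and diam: "\<forall>x1\<in>\<Omega>1. \<forall>x1'\<in>\<Omega>1. norm (x1 - x1') \<le> \<delta>1"
    and x0_in: "x0 \<in> \<Omega>2"
  shows "\<bar>(INF x\<in>\<Omega>1. f x) - (INF x\<in>\<Omega>2. f x)\<bar>
           \<le> L * \<delta>1 * (MAX i\<in>UNIV. \<bar>\<Delta> $ i\<bar>)
              / (MIN i\<in>{i. \<Delta> $ i > 0}. (h - C *v x0) $ i)"
proof -
  define t where "t = (MAX i\<in>UNIV. \<bar>\<Delta> $ i\<bar>) / (MIN i\<in>{i. \<Delta> $ i > 0}. (h - C *v x0) $ i)"
  have \<Delta>_ge0: "0 \<le> \<Delta>" using \<Delta>_nonneg by (simp add: less_eq_vec_def)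
  have \<Delta>_le_slack: "\<Delta> \<le> h - C *v x0" using x0_in by (simp add: \<Omega>2_def less_eq_vec_def le_diff_eq add.commute)
  have "0 \<le> t" unfolding t_def using slack_ratio_nonneg[OF \<Delta>_ge0 \<Delta>_le_slack] .
  have \<Delta>_le: "\<Delta> \<le> min t 1 *\<^sub>R (h - C *v x0)"
    using le_slack_ratio_scaleR[OF \<Delta>_ge0 \<Delta>_le_slack] \<Delta>_le_slack by (simp add: t_def min_def)
  have sub: "\<Omega>2 \<subseteq> \<Omega>1"
    unfolding \<Omega>1_def \<Omega>2_def using \<Delta>_ge0 by (auto intro: order_trans)
  have approx: "\<exists>y\<in>\<Omega>2. dist y x \<le> \<delta>1 * t" if "x \<in> \<Omega>1" for x
  proof
    let ?y = "(1 - min t 1) *\<^sub>R x + min t 1 *\<^sub>R x0"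
    show "?y \<in> \<Omega>2"
      using that \<Delta>_le unfolding \<Omega>1_def \<Omega>2_def
      by (auto intro: matrix_vector_mult_convex_comb_le_tightened)
    have "dist ?y x = min t 1 * norm (x0 - x)"
      using \<open>0 \<le> t\<close> by (simp add: dist_norm algebra_simps flip: scaleR_diff_right)
    also have "\<dots> \<le> t * \<delta>1"
      using diam that sub x0_in \<open>0 \<le> t\<close> by (intro mult_mono) auto
    finally show "dist ?y x \<le> \<delta>1 * t" by (simp add: mult.commute)
  qed
  have "\<bar>(INF x\<in>\<Omega>1. f x) - (INF x\<in>\<Omega>2. f x)\<bar> \<le> L * (\<delta>1 * t)"
    using sub x0_in approx
    by (intro abs_INF_diff_le_lipschitz_approx[OF f_lip \<Omega>1_bounded]) auto
  then show ?thesis by (simp add: t_def)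
qed

end
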